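(* Let $(X,d)$ be a finite metric space. Consider sequences $G_0,G_1,\dots,G_k$ of graphs on vertex set $X$ where $G_0$ is the complete graph on $X$ and each $G_{i+1}$ is obtained from $G_i$ through a $d$-erasure. If such a sequence is maximal (i.e. $G_k$ admits no $d$-erasure), then $G_k$ is a minimum spanning tree of $(X,d)$. Moreover, every minimum spanning tree of $(X,d)$ arises as the final graph $G_k$ of some such maximal sequence.
   Context: All graphs are finite, undirected, simple; edges $xy$ are weighted by $d(xy)=d(x,y)$. A minimum spanning tree of $(X,d)$ is a spanning tree of the complete graph on $X$ minimizing the sum of the weights of its edges. A facet edge of $G$ is an edge $xy$ such that $\{x,y\}$ is a maximal clique of $G$. An edge of $G$ is exposed if it is contained in a unique maximal clique of $G$ and it is not a facet edge. For graphs $G,H$ on vertex set $X$, $H$ is obtained from $G$ through a $d$-erasure if $H=G-e$ for an exposed edge $e$ of $G$ such that $d(e)\ge d(e')$ for every exposed edge $e'$ of $G$. *)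

theory Defs
  imports "HOL-Analysis.Abstract_Metric_Spaces"
begin

text \<open>Simple graphs on a vertex set X are represented by their edge sets:
  sets of 2-element subsets of X.\<close>

definition all_pairs :: "'a set \<Rightarrow> 'a set set" where
  "all_pairs X = {{x, y} | x y. x \<in> X \<and> y \<in> X \<and> x \<noteq> y}"

definition complete_graph :: "'a set \<Rightarrow> 'a set set" where
  "complete_graph X = all_pairs X"

definition is_graph_on :: "'a set \<Rightarrow> 'a set set \<Rightarrow> bool" where
  "is_graph_on X E \<longleftrightarrow> E \<subseteq> all_pairs X"

definition clique :: "'a set \<Rightarrow> 'a set set \<Rightarrow> 'a set \<Rightarrow> bool" where
  "clique X E C \<longleftrightarrow> C \<subseteq> X \<and> (\<forall>x\<in>C. \<forall>y\<in>C. x \<noteq> y \<longrightarrow> {x, y} \<in> E)"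

definition maximal_clique :: "'a set \<Rightarrow> 'a set set \<Rightarrow> 'a set \<Rightarrow> bool" where
  "maximal_clique X E C \<longleftrightarrow> clique X E C \<and> (\<forall>C'. clique X E C' \<and> C \<subseteq> C' \<longrightarrow> C' = C)"

definition facet_edge :: "'a set \<Rightarrow> 'a set set \<Rightarrow> 'a set \<Rightarrow> bool" where
  "facet_edge X E e \<longleftrightarrow> e \<in> E \<and> maximal_clique X E e"

definition exposed_edge :: "'a set \<Rightarrow> 'a set set \<Rightarrow> 'a set \<Rightarrow> bool" where
  "exposed_edge X E e \<longleftrightarrow> e \<in> E \<and> (\<exists>!C. maximal_clique X E C \<and> e \<subseteq> C) \<and> \<not> facet_edge X E e"

definition d_erasure :: "'a set \<Rightarrow> ('a \<Rightarrow> 'a \<Rightarrow> real) \<Rightarrow> 'a set set \<Rightarrow> 'a set set \<Rightarrow> bool" where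
  "d_erasure X d G H \<longleftrightarrow>
     (\<exists>x y. H = G - {{x, y}} \<and> exposed_edge X G {x, y} \<and>
        (\<forall>u v. exposed_edge X G {u, v} \<longrightarrow> d u v \<le> d x y))"

text \<open>Weight of an edge {x,y}: d x y (well defined for symmetric d).\<close>
definition edge_weight :: "('a \<Rightarrow> 'a \<Rightarrow> real) \<Rightarrow> 'a set \<Rightarrow> real" where
  "edge_weight d e = (THE r. \<exists>x y. e = {x, y} \<and> r = d x y)"

definition adjacent :: "'a set set \<Rightarrow> 'a \<Rightarrow> 'a \<Rightarrow> bool" where
  "adjacent E x y \<longleftrightarrow> {x, y} \<in> E \<and> x \<noteq> y"

definition connected_graph :: "'a set \<Rightarrow> 'a set set \<Rightarrow> bool" where
  "connected_graph X E \<longleftrightarrow> (\<forall>x\<in>X. \<forall>y\<in>X. (adjacent E)\<^sup>*\<^sup>* x y)"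

definition is_cycle :: "'a set set \<Rightarrow> 'a list \<Rightarrow> bool" where
  "is_cycle E vs \<longleftrightarrow> length vs \<ge> 3 \<and> distinct vs \<and>
     (\<forall>i < length vs - 1. adjacent E (vs ! i) (vs ! (i + 1))) \<and>
     adjacent E (last vs) (hd vs)"

definition acyclic_graph :: "'a set set \<Rightarrow> bool" where
  "acyclic_graph E \<longleftrightarrow> (\<nexists>vs. is_cycle E vs)"

definition spanning_tree :: "'a set \<Rightarrow> 'a set set \<Rightarrow> bool" where
  "spanning_tree X T \<longleftrightarrow> is_graph_on X T \<and> connected_graph X T \<and> acyclic_graph T"

definition minimum_spanning_tree :: "'a set \<Rightarrow> ('a \<Rightarrow> 'a \<Rightarrow> real) \<Rightarrow> 'a set set \<Rightarrow> bool" where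
  "minimum_spanning_tree X d T \<longleftrightarrow> spanning_tree X T \<and>
     (\<forall>T'. spanning_tree X T' \<longrightarrow> (\<Sum>e\<in>T. edge_weight d e) \<le> (\<Sum>e\<in>T'. edge_weight d e))"

definition erasure_sequence :: "'a set \<Rightarrow> ('a \<Rightarrow> 'a \<Rightarrow> real) \<Rightarrow> 'a set set list \<Rightarrow> bool" where
  "erasure_sequence X d Gs \<longleftrightarrow> Gs \<noteq> [] \<and> hd Gs = complete_graph X \<and>
     (\<forall>i < length Gs - 1. d_erasure X d (Gs ! i) (Gs ! (i + 1)))"

definition maximal_erasure_sequence :: "'a set \<Rightarrow> ('a \<Rightarrow> 'a \<Rightarrow> real) \<Rightarrow> 'a set set list \<Rightarrow> bool" where
  "maximal_erasure_sequence X d Gs \<longleftrightarrow> erasure_sequence X d Gs \<and>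
     \<not> (\<exists>H. d_erasure X d (last Gs) H)"

end

theory Submission
  imports Defs
begin

text \<open>
  Every graph in an erasure sequence is chordal, in the form that each of its induced subgraphs
  has a simplicial vertex, and contains a minimum spanning tree. Chordality survives the erasure
  of an exposed edge. If the erased (heaviest) exposed edge xy lies in the minimum spanning tree T,
  then the cut of T - xy separating x from y is crossed by another exposed edge ab; minimality of T
  gives d x y \<le> d a b, hence equality, and T - xy + ab is a connected graph of the same
  weight avoiding xy, so it contains a minimum spanning tree. A chordal graph without exposed
  edges is 1-degenerate, so each of its edges is a bridge; containing a spanning tree, it is that
  tree. Conversely, while G \<noteq> T the same exchange shows that some heaviest exposed edge of G
  lies outside T, and erasing such edges one by one ends in T.
\<close>

section \<open>Hereditarily simplicial graphs\<close>

definition neighbours :: "'a set set \<Rightarrow> 'a set \<Rightarrow> 'a \<Rightarrow> 'a set" where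
  "neighbours E S v = {u \<in> S. adjacent E v u}"

definition simplicial :: "'a set set \<Rightarrow> 'a set \<Rightarrow> 'a \<Rightarrow> bool" where
  "simplicial E S v \<longleftrightarrow> v \<in> S \<and> pairwise (adjacent E) (neighbours E S v)"

text \<open>By Dirac's theorem these are exactly the chordal graphs.\<close>

definition hereditarily_simplicial :: "'a set set \<Rightarrow> 'a set \<Rightarrow> bool" where
  "hereditarily_simplicial E X \<longleftrightarrow> (\<forall>S \<subseteq> X. S \<noteq> {} \<longrightarrow> (\<exists>v. simplicial E S v))"

definition common_neighbours :: "'a set set \<Rightarrow> 'a set \<Rightarrow> 'a \<Rightarrow> 'a \<Rightarrow> 'a set" where
  "common_neighbours E S x y = neighbours E S x \<inter> neighbours E S y"

text \<open>For graphs on a finite set this agrees with \<^const>\<open>exposed_edge\<close>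
  (\<open>exposed_edge_iff_exposed_in\<close>), but unlike it the notion restricts to vertex subsets,
  as the inductions below require.\<close>

definition exposed_in :: "'a set set \<Rightarrow> 'a set \<Rightarrow> 'a \<Rightarrow> 'a \<Rightarrow> bool" where
  "exposed_in E S x y \<longleftrightarrow> x \<in> S \<and> y \<in> S \<and> adjacent E x y \<and>
     common_neighbours E S x y \<noteq> {} \<and> pairwise (adjacent E) (common_neighbours E S x y)"

lemma adjacent_commute: "adjacent E x y \<longleftrightarrow> adjacent E y x"
  by (auto simp: adjacent_def insert_commute)

lemma adjacent_Diff_edge:
  "adjacent (E - {{a, b}}) x y \<longleftrightarrow> adjacent E x y \<and> {x, y} \<noteq> {a, b}"
  by (auto simp: adjacent_def)

lemma common_neighbours_commute: "common_neighbours E S x y = common_neighbours E S y x"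
  by (auto simp: common_neighbours_def)

lemma exposed_in_commute: "exposed_in E S x y \<longleftrightarrow> exposed_in E S y x"
  by (auto simp: exposed_in_def common_neighbours_commute adjacent_commute)

lemma neighbours_remove_nonadjacent:
  "\<not> adjacent E u v \<Longrightarrow> neighbours E (S - {v}) u = neighbours E S u"
  by (auto simp: neighbours_def)

lemma hereditarily_simplicial_subset:
  "hereditarily_simplicial E X \<Longrightarrow> S \<subseteq> X \<Longrightarrow> hereditarily_simplicial E S"
  unfolding hereditarily_simplicial_def by blast

lemma simplicial_remove_nonadjacent:
  "simplicial E (S - {v}) u \<Longrightarrow> \<not> adjacent E u v \<Longrightarrow> simplicial E S u"
  by (simp add: simplicial_def neighbours_remove_nonadjacent)

lemma nonadjacent_simplicial_vertices:
  assumes "finite S" "hereditarily_simplicial E S" "\<not> pairwise (adjacent E) S"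
  shows "\<exists>a b. simplicial E S a \<and> simplicial E S b \<and> a \<noteq> b \<and> \<not> adjacent E a b"
  using assms
proof (induction S rule: finite_psubset_induct)
  case (psubset S)
  then have "S \<noteq> {}" by auto
  then obtain v where v: "simplicial E S v"
    using psubset.prems(1) unfolding hereditarily_simplicial_def by blast
  then have "v \<in> S" by (simp add: simplicial_def)
  obtain u where u: "simplicial E (S - {v}) u" "\<not> adjacent E u v"
  proof (cases "pairwise (adjacent E) (S - {v})")
    case True
    with psubset.prems(2) obtain u where "u \<in> S - {v}" "\<not> adjacent E u v"
      using \<open>v \<in> S\<close> unfolding pairwise_def by (metis Diff_iff adjacent_commute singletonD)
    moreover from True have "simplicial E (S - {v}) u" if "u \<in> S - {v}" for u
      using that pairwise_subset[OF True, of "neighbours E (S - {v}) u"]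
      by (auto simp: simplicial_def neighbours_def)
    ultimately show ?thesis using that by blast
  next
    case False
    have "S - {v} \<subset> S" "hereditarily_simplicial E (S - {v})"
      using \<open>v \<in> S\<close> hereditarily_simplicial_subset[OF psubset.prems(1)] by auto
    from psubset.IH[OF this False] obtain a b where
      "simplicial E (S - {v}) a" "simplicial E (S - {v}) b" "a \<noteq> b" "\<not> adjacent E a b"
      by blast
    moreover have "\<not> (adjacent E a v \<and> adjacent E b v)"
    proof
      assume "adjacent E a v \<and> adjacent E b v"
      with calculation have "a \<in> neighbours E S v" "b \<in> neighbours E S v"
        by (auto simp: simplicial_def neighbours_def adjacent_commute[of E v])
      with v \<open>a \<noteq> b\<close> \<open>\<not> adjacent E a b\<close> show False
        by (auto simp: simplicial_def pairwise_def)
    qed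
    ultimately show ?thesis using that by blast
  qed
  have "u \<noteq> v" using u(1) by (simp add: simplicial_def)
  with v u simplicial_remove_nonadjacent[OF u] show ?case by blast
qed

lemma simplicial_remove_edge:
  assumes "simplicial E S v" "\<not> {x, y} \<subseteq> neighbours E S v"
  shows "simplicial (E - {{x, y}}) S v"
proof -
  have "neighbours (E - {{x, y}}) S v \<subseteq> neighbours E S v"
    by (auto simp: neighbours_def adjacent_Diff_edge)
  with assms show ?thesis
    unfolding simplicial_def pairwise_def adjacent_Diff_edge by (auto simp: doubleton_eq_iff)
qed

lemma common_neighboursI:
  "S \<subseteq> X \<Longrightarrow> v \<in> S \<Longrightarrow> {x, y} \<subseteq> neighbours E S v \<Longrightarrow> v \<in> common_neighbours E X x y"
  by (auto simp: common_neighbours_def neighbours_def adjacent_commute[of E v])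

lemma hereditarily_simplicial_remove_exposed:
  assumes "finite X" "hereditarily_simplicial E X" "exposed_in E X x y"
  shows "hereditarily_simplicial (E - {{x, y}}) X"
  unfolding hereditarily_simplicial_def
proof (intro allI impI)
  fix S assume "S \<subseteq> X" "S \<noteq> {}"
  have "\<exists>v. simplicial E S v \<and> \<not> {x, y} \<subseteq> neighbours E S v"
  proof (cases "x \<in> S \<and> y \<in> S")
    case False
    moreover obtain v where "simplicial E S v"
      using assms(2) \<open>S \<subseteq> X\<close> \<open>S \<noteq> {}\<close> unfolding hereditarily_simplicial_def by blast
    ultimately show ?thesis by (auto simp: neighbours_def)
  next
    case xy: True
    show ?thesis
    proof (cases "pairwise (adjacent E) S")
      case True
      then have "simplicial E S x"
        using xy pairwise_subset[OF True, of "neighbours E S x"]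
        by (auto simp: simplicial_def neighbours_def)
      then show ?thesis by (auto simp: neighbours_def adjacent_def)
    next
      case False
      obtain a b where ab: "simplicial E S a" "simplicial E S b" "a \<noteq> b" "\<not> adjacent E a b"
        using nonadjacent_simplicial_vertices[OF finite_subset[OF \<open>S \<subseteq> X\<close> assms(1)]
            hereditarily_simplicial_subset[OF assms(2) \<open>S \<subseteq> X\<close>] False] by blast
      have "a \<in> S" "b \<in> S" using ab by (simp_all add: simplicial_def)
      have "pairwise (adjacent E) (common_neighbours E X x y)"
        using assms(3) by (simp add: exposed_in_def)
      with ab have "a \<notin> common_neighbours E X x y \<or> b \<notin> common_neighbours E X x y"
        by (auto simp: pairwise_def)
      with ab \<open>a \<in> S\<close> \<open>b \<in> S\<close> show ?thesis
        using common_neighboursI[OF \<open>S \<subseteq> X\<close>] by blast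
    qed
  qed
  then obtain v where "simplicial E S v" "\<not> {x, y} \<subseteq> neighbours E S v" by blast
  then show "\<exists>v. simplicial (E - {{x, y}}) S v" by (blast intro: simplicial_remove_edge)
qed

lemma simplicial_edge_exposed:
  assumes "simplicial E S v" "u \<in> neighbours E S v" "w \<in> neighbours E S v" "w \<noteq> u"
  shows "exposed_in E S v u"
proof -
  have clique: "pairwise (adjacent E) (neighbours E S v)"
    using assms(1) by (simp add: simplicial_def)
  have "common_neighbours E S v u = neighbours E S v - {u}"
  proof
    show "common_neighbours E S v u \<subseteq> neighbours E S v - {u}"
      by (auto simp: common_neighbours_def neighbours_def adjacent_def)
    show "neighbours E S v - {u} \<subseteq> common_neighbours E S v u"
      using clique assms(2) by (auto simp: common_neighbours_def neighbours_def pairwise_def)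
  qed
  moreover have "v \<in> S" "u \<in> S" "adjacent E v u"
    using assms(1,2) by (auto simp: simplicial_def neighbours_def)
  ultimately show ?thesis
    using assms(3,4) pairwise_subset[OF clique] unfolding exposed_in_def by blast
qed

lemma common_neighbours_remove_vertex:
  "\<not> (adjacent E a v \<and> adjacent E b v) \<Longrightarrow>
    common_neighbours E (S - {v}) a b = common_neighbours E S a b"
  by (auto simp: common_neighbours_def neighbours_def)

lemma exposed_in_remove_vertex_iff:
  assumes "a \<noteq> v" "b \<noteq> v" "\<not> (adjacent E a v \<and> adjacent E b v)"
  shows "exposed_in E (S - {v}) a b \<longleftrightarrow> exposed_in E S a b"
  using assms by (simp add: exposed_in_def common_neighbours_remove_vertex)

text \<open>Induction on S, deleting a simplicial vertex v outside {x, y}: if v has neighbours on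
  both sides of the cut, an edge from v to the other side is already exposed; otherwise v is
  a common neighbour of no crossing pair, so deleting it changes no crossing exposed edge.\<close>

lemma exposed_edge_across_cut:
  assumes "finite S" "hereditarily_simplicial E S" "exposed_in E S x y" "x \<in> A" "y \<notin> A"
  shows "\<exists>a b. exposed_in E S a b \<and> a \<in> A \<and> b \<notin> A \<and> {a, b} \<noteq> {x, y}"
  using assms
proof (induction S rule: finite_psubset_induct)
  case (psubset S)
  note exposed = \<open>exposed_in E S x y\<close>
  have "x \<in> S" "y \<in> S" "x \<noteq> y" using exposed by (auto simp: exposed_in_def adjacent_def)
  show ?case
  proof (cases "pairwise (adjacent E) S")
    case True
    obtain z where z: "z \<in> common_neighbours E S x y"
      using exposed by (auto simp: exposed_in_def)
    then have "z \<noteq> x" "z \<noteq> y" by (auto simp: common_neighbours_def neighbours_def adjacent_def)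
    have "exposed_in E S a b" if "a \<in> {x, y, z}" "b \<in> {x, y, z}" "a \<noteq> b" for a b
    proof -
      have "{x, y, z} \<subseteq> S" using z \<open>x \<in> S\<close> \<open>y \<in> S\<close>
        by (auto simp: common_neighbours_def neighbours_def)
      with True that have "{x, y, z} - {a, b} \<subseteq> common_neighbours E S a b"
        by (auto simp: common_neighbours_def neighbours_def pairwise_def)
      moreover have "{x, y, z} - {a, b} \<noteq> {}"
        using that \<open>z \<noteq> x\<close> \<open>z \<noteq> y\<close> \<open>x \<noteq> y\<close> by auto
      ultimately show ?thesis
        using True that \<open>{x, y, z} \<subseteq> S\<close> pairwise_subset[OF True]
        by (auto simp: exposed_in_def pairwise_def common_neighbours_def neighbours_def)
    qed
    then have "exposed_in E S z y" "exposed_in E S x z"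
      using \<open>z \<noteq> x\<close> \<open>z \<noteq> y\<close> \<open>x \<noteq> y\<close> by auto
    moreover have "{z, y} \<noteq> {x, y}" "{x, z} \<noteq> {x, y}"
      using \<open>z \<noteq> x\<close> \<open>z \<noteq> y\<close> by (auto simp: doubleton_eq_iff)
    ultimately show ?thesis
      using psubset.prems(3,4) by (cases "z \<in> A") blast+
  next
    case False
    obtain a b where ab: "simplicial E S a" "simplicial E S b" "a \<noteq> b" "\<not> adjacent E a b"
      using nonadjacent_simplicial_vertices[OF psubset.hyps psubset.prems(1) False] by blast
    obtain v where v: "simplicial E S v" "v \<noteq> x" "v \<noteq> y"
      using ab exposed by (metis exposed_in_def adjacent_commute)
    then have "v \<in> S" by (simp add: simplicial_def)
    show ?thesis
    proof (cases "\<exists>a \<in> A. \<exists>b \<in> - A. a \<in> neighbours E S v \<and> b \<in> neighbours E S v")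
      case True
      then obtain a b where "a \<in> A" "b \<notin> A" "a \<in> neighbours E S v" "b \<in> neighbours E S v"
        by blast
      moreover have "a \<noteq> b" using calculation by blast
      ultimately have "exposed_in E S v a" "exposed_in E S v b"
        using simplicial_edge_exposed[OF v(1)] by metis+
      then show ?thesis
        using \<open>a \<in> A\<close> \<open>b \<notin> A\<close> v(2,3) exposed_in_commute[of E S v a]
        by (cases "v \<in> A") (auto simp: doubleton_eq_iff)
    next
      case False
      have v_separates: "\<not> (adjacent E a v \<and> adjacent E b v)"
        if "a \<in> S" "b \<in> S" "a \<in> A" "b \<notin> A" for a b
        using False that by (auto simp: neighbours_def adjacent_commute[of E v])
      have smaller: "S - {v} \<subset> S" "hereditarily_simplicial E (S - {v})"
        using \<open>v \<in> S\<close> hereditarily_simplicial_subset[OF psubset.prems(1)] by auto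
      have "exposed_in E (S - {v}) x y"
        using exposed exposed_in_remove_vertex_iff[OF v(2,3)[symmetric]
          v_separates[OF \<open>x \<in> S\<close> \<open>y \<in> S\<close> psubset.prems(3,4)]] by blast
      from psubset.IH[OF smaller this psubset.prems(3,4)] obtain a b where
        ab: "exposed_in E (S - {v}) a b" "a \<in> A" "b \<notin> A" "{a, b} \<noteq> {x, y}"
        by blast
      then have "a \<in> S" "b \<in> S" "a \<noteq> v" "b \<noteq> v" by (auto simp: exposed_in_def)
      with ab show ?thesis
        using exposed_in_remove_vertex_iff[of a v b E S] v_separates[of a b] by blast
    qed
  qed
qed

section \<open>Chordal graphs without exposed edges\<close>

text \<open>The 1-degenerate graphs are the forests.\<close>

definition one_degenerate :: "'a set set \<Rightarrow> 'a set \<Rightarrow> bool" where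
  "one_degenerate E S \<longleftrightarrow> (\<forall>S' \<subseteq> S. S' \<noteq> {} \<longrightarrow> (\<exists>v \<in> S'. \<exists>u. neighbours E S' v \<subseteq> {u}))"

lemma no_exposed_imp_one_degenerate:
  assumes "finite S" "hereditarily_simplicial E S" "\<And>a b. \<not> exposed_in E S a b"
  shows "one_degenerate E S"
  using assms
proof (induction S rule: finite_psubset_induct)
  case (psubset S)
  show ?case
  proof (cases "S = {}")
    case True
    then show ?thesis by (simp add: one_degenerate_def)
  next
    case False
    then obtain v where v: "simplicial E S v"
      using psubset.prems(1) unfolding hereditarily_simplicial_def by blast
    then have "v \<in> S" by (simp add: simplicial_def)
    have "\<exists>u. neighbours E S v \<subseteq> {u}"
      using simplicial_edge_exposed[OF v] psubset.prems(2) by blast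
    then obtain u where u: "neighbours E S v \<subseteq> {u}" by blast
    have "\<not> exposed_in E (S - {v}) a b" for a b
    proof
      assume "exposed_in E (S - {v}) a b"
      moreover from this have "a \<noteq> v" "b \<noteq> v" "a \<noteq> b" "a \<in> S" "b \<in> S"
        by (auto simp: exposed_in_def adjacent_def)
      moreover from this u have "\<not> (adjacent E a v \<and> adjacent E b v)"
        by (auto simp: neighbours_def adjacent_commute[of E v])
      ultimately show False
        using exposed_in_remove_vertex_iff[of a v b E S] psubset.prems(2) by blast
    qed
    moreover have "S - {v} \<subset> S" "hereditarily_simplicial E (S - {v})"
      using \<open>v \<in> S\<close> hereditarily_simplicial_subset[OF psubset.prems(1)] by auto
    ultimately have IH: "one_degenerate E (S - {v})"
      using psubset.IH by blast
    show ?thesis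
      unfolding one_degenerate_def
    proof (intro allI impI)
      fix T assume "T \<subseteq> S" "T \<noteq> {}"
      show "\<exists>w \<in> T. \<exists>u. neighbours E T w \<subseteq> {u}"
      proof (cases "v \<in> T")
        case True
        have "neighbours E T v \<subseteq> neighbours E S v"
          using \<open>T \<subseteq> S\<close> by (auto simp: neighbours_def)
        with True u show ?thesis by blast
      next
        case False
        with \<open>T \<subseteq> S\<close> \<open>T \<noteq> {}\<close> IH show ?thesis
          unfolding one_degenerate_def by blast
      qed
    qed
  qed
qed

definition reach_within :: "'a set set \<Rightarrow> 'a set \<Rightarrow> 'a \<Rightarrow> 'a \<Rightarrow> bool" where
  "reach_within F S = (\<lambda>a b. a \<in> S \<and> b \<in> S \<and> adjacent F a b)\<^sup>*\<^sup>*"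

lemma reach_within_sym: "reach_within F S a b \<Longrightarrow> reach_within F S b a"
proof -
  have "symp (\<lambda>a b. a \<in> S \<and> b \<in> S \<and> adjacent F a b)"
    by (auto intro: sympI simp: adjacent_commute[of F])
  then show "reach_within F S a b \<Longrightarrow> reach_within F S b a"
    unfolding reach_within_def by (metis symp_rtranclp sympD)
qed

lemma not_reach_within_from_isolated:
  assumes "\<And>p. p \<in> S \<Longrightarrow> \<not> adjacent F a p" "a \<noteq> b"
  shows "\<not> reach_within F S a b"
  using assms unfolding reach_within_def by (auto elim: converse_rtranclpE)

lemma reach_within_avoid_pendant:
  assumes "F \<subseteq> E" "neighbours E S w \<subseteq> {q}" "reach_within F S a b" "a \<noteq> w" "b \<noteq> w"
  shows "reach_within F (S - {w}) a b"
proof -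
  have unique: "p = p'" if "p \<in> S" "p' \<in> S" "adjacent F w p" "adjacent F w p'" for p p'
    using assms(1,2) that by (auto simp: neighbours_def adjacent_def)
  txt \<open>A walk entering w must leave it towards the vertex it came from, which the second
    conjunct records as reachable.\<close>
  have "(t \<noteq> w \<longrightarrow> reach_within F (S - {w}) a t) \<and>
        (t = w \<longrightarrow> (\<forall>p \<in> S. adjacent F w p \<longrightarrow> reach_within F (S - {w}) a p))"
    if "reach_within F S a t" for t
    using that unfolding reach_within_def[of F S]
  proof (induction rule: rtranclp_induct)
    case base
    then show ?case using assms(4) by (simp add: reach_within_def)
  next
    case (step t t')
    then have "t \<in> S" "t' \<in> S" "adjacent F t t'" by auto
    show ?case
    proof (intro conjI impI ballI)
      assume "t' \<noteq> w"
      show "reach_within F (S - {w}) a t'"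
      proof (cases "t = w")
        case True
        then show ?thesis using step.IH \<open>t' \<in> S\<close> \<open>adjacent F t t'\<close> by blast
      next
        case False
        with step.IH have "reach_within F (S - {w}) a t" by blast
        with False \<open>t' \<noteq> w\<close> \<open>t \<in> S\<close> \<open>t' \<in> S\<close> \<open>adjacent F t t'\<close> show ?thesis
          unfolding reach_within_def by (auto intro: rtranclp.rtrancl_into_rtrancl)
      qed
    next
      fix p assume "t' = w" "p \<in> S" "adjacent F w p"
      then have "t \<noteq> w" "adjacent F w t"
        using \<open>adjacent F t t'\<close> by (auto simp: adjacent_def insert_commute)
      then show "reach_within F (S - {w}) a p"
        using unique[OF \<open>t \<in> S\<close> \<open>p \<in> S\<close>] \<open>adjacent F w p\<close> step.IH by blast
    qed
  qed
  with assms(3,5) show ?thesis by blast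
qed

lemma one_degenerate_edge_is_bridge:
  assumes "finite S" "one_degenerate E S" "u \<in> S" "v \<in> S" "adjacent E u v"
    "F \<subseteq> E - {{u, v}}"
  shows "\<not> reach_within F S u v"
  using assms
proof (induction S rule: finite_psubset_induct)
  case (psubset S)
  obtain w q where "w \<in> S" and w: "neighbours E S w \<subseteq> {q}"
    using psubset.prems(1,2) unfolding one_degenerate_def by blast
  have "u \<noteq> v" using psubset.prems(4) by (simp add: adjacent_def)
  show ?case
  proof (cases "w = u \<or> w = v")
    case True
    define w' where "w' = (if w = u then v else u)"
    have "{w, w'} = {u, v}" "w' \<in> neighbours E S w"
      using True psubset.prems(2,3,4)
      by (auto simp: w'_def neighbours_def adjacent_commute[of E u])
    have "\<not> adjacent F w p" if "p \<in> S" for p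
    proof
      assume "adjacent F w p"
      with psubset.prems(5) that have "p \<in> neighbours E S w" "{w, p} \<noteq> {u, v}"
        by (auto simp: neighbours_def adjacent_def)
      with w \<open>w' \<in> neighbours E S w\<close> \<open>{w, w'} = {u, v}\<close> show False by blast
    qed
    then show ?thesis
      using True not_reach_within_from_isolated \<open>u \<noteq> v\<close> reach_within_sym by metis
  next
    case False
    have "S - {w} \<subset> S" "one_degenerate E (S - {w})"
      using \<open>w \<in> S\<close> psubset.prems(1) unfolding one_degenerate_def by auto
    then have "\<not> reach_within F (S - {w}) u v"
      using psubset.IH False psubset.prems(2-5) by blast
    then show ?thesis
      using reach_within_avoid_pendant[OF _ w] psubset.prems(5) False by blast
  qed
qed

section \<open>Exposed edges and maximal cliques\<close>

lemma doubleton_in_all_pairs_iff [simp]: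
  "{x, y} \<in> all_pairs X \<longleftrightarrow> x \<in> X \<and> y \<in> X \<and> x \<noteq> y"
  by (auto simp: all_pairs_def doubleton_eq_iff)

lemma clique_iff_pairwise: "clique X E C \<longleftrightarrow> C \<subseteq> X \<and> pairwise (adjacent E) C"
  by (auto simp: clique_def pairwise_def adjacent_def)

lemma maximal_clique_exists:
  assumes "finite X" "clique X E D"
  obtains C where "maximal_clique X E C" "D \<subseteq> C"
proof -
  have "{C. clique X E C \<and> D \<subseteq> C} \<subseteq> Pow X" by (auto simp: clique_def)
  then have "finite {C. clique X E C \<and> D \<subseteq> C}"
    using assms(1) by (simp add: finite_subset)
  moreover have "{C. clique X E C \<and> D \<subseteq> C} \<noteq> {}" using assms(2) by blast
  ultimately obtain C where "C \<in> {C. clique X E C \<and> D \<subseteq> C}"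
    and max: "\<forall>C' \<in> {C. clique X E C \<and> D \<subseteq> C}. C \<subseteq> C' \<longrightarrow> C = C'"
    by (meson finite_has_maximal)
  then have "maximal_clique X E C" "D \<subseteq> C" unfolding maximal_clique_def by auto
  then show ?thesis using that by blast
qed

lemma clique_through_edge_subset:
  "clique X E C \<Longrightarrow> {x, y} \<subseteq> C \<Longrightarrow> C \<subseteq> insert x (insert y (common_neighbours E X x y))"
  by (auto simp: clique_iff_pairwise common_neighbours_def neighbours_def pairwise_def)

lemma clique_through_edge_iff:
  assumes "x \<in> X" "y \<in> X" "adjacent E x y"
  shows "clique X E (insert x (insert y (common_neighbours E X x y))) \<longleftrightarrow>
    pairwise (adjacent E) (common_neighbours E X x y)"
  using assms
  by (auto simp: clique_iff_pairwise common_neighbours_def neighbours_def pairwise_insert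
      adjacent_def insert_commute)

lemma exposed_edge_iff_exposed_in:
  assumes "finite X" "G \<subseteq> all_pairs X"
  shows "exposed_edge X G {x, y} \<longleftrightarrow> exposed_in G X x y"
proof
  assume exposed: "exposed_edge X G {x, y}"
  then have "{x, y} \<in> G" by (simp add: exposed_edge_def)
  moreover from this assms(2) have "{x, y} \<in> all_pairs X" by blast
  ultimately have "x \<in> X" "y \<in> X" "adjacent G x y" by (simp_all add: adjacent_def)
  from exposed obtain C where C: "maximal_clique X G C" "{x, y} \<subseteq> C"
    and unique: "\<And>C'. maximal_clique X G C' \<Longrightarrow> {x, y} \<subseteq> C' \<Longrightarrow> C' = C"
    unfolding exposed_edge_def by metis
  have "common_neighbours G X x y \<noteq> {}"
  proof
    assume "common_neighbours G X x y = {}"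
    then have "maximal_clique X G {x, y}"
      using clique_through_edge_iff[OF \<open>x \<in> X\<close> \<open>y \<in> X\<close> \<open>adjacent G x y\<close>]
        clique_through_edge_subset unfolding maximal_clique_def by fastforce
    with exposed \<open>{x, y} \<in> G\<close> show False by (simp add: exposed_edge_def facet_edge_def)
  qed
  moreover have "common_neighbours G X x y \<subseteq> C"
  proof
    fix p assume "p \<in> common_neighbours G X x y"
    then have "clique X G {x, y, p}"
      using \<open>x \<in> X\<close> \<open>y \<in> X\<close> \<open>adjacent G x y\<close>
      by (auto simp: clique_iff_pairwise common_neighbours_def neighbours_def pairwise_insert
          adjacent_def insert_commute)
    then obtain C' where "maximal_clique X G C'" "{x, y, p} \<subseteq> C'"
      using maximal_clique_exists[OF assms(1)] by blast
    then show "p \<in> C" using unique by blast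
  qed
  moreover have "pairwise (adjacent G) C"
    using C(1) by (simp add: maximal_clique_def clique_iff_pairwise)
  ultimately show "exposed_in G X x y"
    using \<open>x \<in> X\<close> \<open>y \<in> X\<close> \<open>adjacent G x y\<close> pairwise_subset by (auto simp: exposed_in_def)
next
  assume exposed: "exposed_in G X x y"
  define C where "C = insert x (insert y (common_neighbours G X x y))"
  have "x \<in> X" "y \<in> X" "adjacent G x y" using exposed by (auto simp: exposed_in_def)
  then have "clique X G C"
    using exposed clique_through_edge_iff[of x X y G] by (simp add: C_def exposed_in_def)
  have through: "C' \<subseteq> C" if "clique X G C'" "{x, y} \<subseteq> C'" for C'
    using clique_through_edge_subset[OF that] by (simp add: C_def)
  have "{x, y} \<subseteq> C" by (simp add: C_def)
  have "maximal_clique X G C"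
    using \<open>clique X G C\<close> through \<open>{x, y} \<subseteq> C\<close> unfolding maximal_clique_def by blast
  have unique: "C' = C" if "maximal_clique X G C'" "{x, y} \<subseteq> C'" for C'
    using that through \<open>clique X G C\<close> unfolding maximal_clique_def by blast
  have "\<exists>!C. maximal_clique X G C \<and> {x, y} \<subseteq> C"
  proof (rule ex1I[of _ C])
    show "maximal_clique X G C \<and> {x, y} \<subseteq> C"
      using \<open>maximal_clique X G C\<close> \<open>{x, y} \<subseteq> C\<close> by blast
  qed (use unique in blast)
  moreover have "C \<noteq> {x, y}"
    using exposed by (auto simp: C_def exposed_in_def common_neighbours_def neighbours_def
        adjacent_def)
  then have "\<not> maximal_clique X G {x, y}"
    using \<open>clique X G C\<close> \<open>{x, y} \<subseteq> C\<close> unfolding maximal_clique_def by blast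
  ultimately show "exposed_edge X G {x, y}"
    using \<open>adjacent G x y\<close> by (simp add: exposed_edge_def facet_edge_def adjacent_def)
qed

section \<open>Connectivity and spanning trees\<close>

abbreviation reach :: "'a set set \<Rightarrow> 'a \<Rightarrow> 'a \<Rightarrow> bool" where
  "reach F \<equiv> (adjacent F)\<^sup>*\<^sup>*"

lemma reach_sym: "reach F a b \<Longrightarrow> reach F b a"
  by (metis adjacent_commute sympI symp_rtranclp sympD)

lemma reach_mono:
  assumes "F \<subseteq> F'" "reach F a b"
  shows "reach F' a b"
proof -
  have "adjacent F \<le> adjacent F'" using assms(1) by (auto simp: adjacent_def)
  then show ?thesis using assms(2) by (metis rtranclp_mono predicate2D)
qed

lemma connected_graph_if_edges_reachable:
  assumes "connected_graph X H" "\<And>a b. adjacent H a b \<Longrightarrow> reach H' a b"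
  shows "connected_graph X H'"
proof -
  have "reach H' x y" if "reach H x y" for x y
    using that by (induction rule: rtranclp_induct) (simp, meson assms(2) rtranclp_trans)
  with assms(1) show ?thesis unfolding connected_graph_def by blast
qed

lemma connected_graph_replace_edge:
  assumes "connected_graph X T" "T - {{a, b}} \<subseteq> T'" "reach T' a b"
  shows "connected_graph X T'"
proof (rule connected_graph_if_edges_reachable[OF assms(1)])
  fix u v assume "adjacent T u v"
  show "reach T' u v"
  proof (cases "{u, v} = {a, b}")
    case True
    then show ?thesis using assms(3) reach_sym by (auto simp: doubleton_eq_iff)
  next
    case False
    with \<open>adjacent T u v\<close> assms(2) have "adjacent T' u v" by (auto simp: adjacent_def)
    then show ?thesis by blast
  qed
qed

lemma reach_remove_edge_dichotomy:
  assumes "connected_graph X T" "x \<in> X" "z \<in> X"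
  shows "reach (T - {{x, y}}) x z \<or> reach (T - {{x, y}}) y z"
proof -
  have "reach T x z" using assms unfolding connected_graph_def by blast
  then show ?thesis
  proof (induction rule: rtranclp_induct)
    case (step t t')
    show ?case
    proof (cases "{t, t'} = {x, y}")
      case True
      then show ?thesis by (auto simp: doubleton_eq_iff)
    next
      case False
      with step.hyps(2) have "adjacent (T - {{x, y}}) t t'" by (simp add: adjacent_Diff_edge)
      with step.IH show ?thesis by (meson rtranclp.rtrancl_into_rtrancl)
    qed
  qed simp
qed

lemma acyclic_if_edges_are_bridges:
  assumes "\<And>a b. adjacent E a b \<Longrightarrow> \<not> reach (E - {{a, b}}) a b"
  shows "acyclic_graph E"
  unfolding acyclic_graph_def
proof
  assume "\<exists>vs. is_cycle E vs"
  then obtain vs where "is_cycle E vs" by blast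
  define n where "n = length vs"
  have "n \<ge> 3" "distinct vs"
    and adj: "\<And>i. i < n - 1 \<Longrightarrow> adjacent E (vs ! i) (vs ! (i + 1))"
    and "adjacent E (last vs) (hd vs)"
    using \<open>is_cycle E vs\<close> unfolding is_cycle_def n_def by auto
  define a b where "a = vs ! 0" and "b = vs ! (n - 1)"
  have "adjacent E a b"
    using \<open>adjacent E (last vs) (hd vs)\<close> \<open>n \<ge> 3\<close> adjacent_commute
    by (metis a_def b_def hd_conv_nth last_conv_nth list.size(3) n_def not_numeral_le_zero)
  have index_eq: "i = j" if "i < n" "j < n" "vs ! i = vs ! j" for i j
    using \<open>distinct vs\<close> that n_def nth_eq_iff_index_eq by blast
  have "reach (E - {{a, b}}) a (vs ! i)" if "i < n" for i
    using that
  proof (induction i)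
    case (Suc i)
    have "{vs ! i, vs ! (i + 1)} \<noteq> {a, b}"
    proof
      assume "{vs ! i, vs ! (i + 1)} = {a, b}"
      then consider "vs ! i = a" "vs ! (i + 1) = b" | "vs ! i = b"
        by (auto simp: doubleton_eq_iff)
      then show False
      proof cases
        case 1
        then have "i = 0" "i + 1 = n - 1"
          using index_eq[of i 0] index_eq[of "i + 1" "n - 1"] Suc.prems
          unfolding a_def b_def by simp_all
        with \<open>n \<ge> 3\<close> show False by simp
      next
        case 2
        then have "i = n - 1" using index_eq[of i "n - 1"] Suc.prems unfolding b_def by simp
        with Suc.prems show False by simp
      qed
    qed
    with adj[of i] Suc have "adjacent (E - {{a, b}}) (vs ! i) (vs ! Suc i)"
      by (simp add: adjacent_Diff_edge)
    with Suc show ?case by (auto intro: rtranclp.rtrancl_into_rtrancl)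
  qed (simp add: a_def)
  then have "reach (E - {{a, b}}) a b" using \<open>n \<ge> 3\<close> unfolding b_def by auto
  with assms \<open>adjacent E a b\<close> show False by blast
qed

lemma finite_all_pairs: "finite X \<Longrightarrow> finite (all_pairs X)"
  by (rule finite_subset[of _ "Pow X"]) (auto simp: all_pairs_def)

lemma complete_graph_connected: "connected_graph X (complete_graph X)"
  unfolding connected_graph_def complete_graph_def
  by (metis adjacent_def doubleton_in_all_pairs_iff r_into_rtranclp rtranclp.rtrancl_refl)

lemma connected_graph_has_spanning_tree:
  assumes "finite X" "H \<subseteq> all_pairs X" "connected_graph X H"
  obtains T where "T \<subseteq> H" "spanning_tree X T"
proof -
  obtain T where T: "T \<subseteq> H" "connected_graph X T"
    and min: "\<And>T'. T' \<subseteq> H \<Longrightarrow> connected_graph X T' \<Longrightarrow> card T \<le> card T'"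
    using ex_has_least_nat[of "\<lambda>T. T \<subseteq> H \<and> connected_graph X T" H card] assms(3) by blast
  have "finite T"
    using finite_subset[OF T(1) finite_subset[OF assms(2) finite_all_pairs[OF assms(1)]]] .
  have "acyclic_graph T"
  proof (rule acyclic_if_edges_are_bridges)
    fix a b assume "adjacent T a b"
    show "\<not> reach (T - {{a, b}}) a b"
    proof
      assume "reach (T - {{a, b}}) a b"
      then have "connected_graph X (T - {{a, b}})"
        using connected_graph_replace_edge[OF T(2) subset_refl] by blast
      then have "card T \<le> card (T - {{a, b}})" using min T(1) by blast
      moreover have "card (T - {{a, b}}) < card T"
        using \<open>finite T\<close> \<open>adjacent T a b\<close> by (meson adjacent_def card_Diff1_less)
      ultimately show False by simp
    qed
  qed
  with T assms(2) show ?thesis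
    using that unfolding spanning_tree_def is_graph_on_def by blast
qed

lemma reach_within_if_reach:
  assumes "F \<subseteq> all_pairs S" "reach F a b"
  shows "reach_within F S a b"
  using assms(2) unfolding reach_within_def
proof (induction rule: rtranclp_induct)
  case (step y z)
  moreover from step.hyps(2) assms(1) have "{y, z} \<in> all_pairs S" by (auto simp: adjacent_def)
  ultimately show ?case by (simp add: rtranclp.rtrancl_into_rtrancl)
qed simp

lemma no_exposed_edge_imp_eq_connected_subgraph:
  assumes "finite X" "G \<subseteq> all_pairs X" "hereditarily_simplicial G X"
    "\<And>a b. \<not> exposed_in G X a b" "T \<subseteq> G" "connected_graph X T"
  shows "G = T"
proof (rule ccontr)
  assume "G \<noteq> T"
  with assms(5) obtain e where "e \<in> G" "e \<notin> T" by blast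
  with assms(2) obtain u v where uv: "e = {u, v}" "u \<in> X" "v \<in> X" "u \<noteq> v"
    by (auto simp: all_pairs_def)
  have "reach T u v" using assms(6) uv(2,3) unfolding connected_graph_def by blast
  then have "reach (G - {{u, v}}) u v"
    using reach_mono[of T "G - {{u, v}}"] assms(5) \<open>e \<notin> T\<close> uv(1) by blast
  then have "reach_within (G - {{u, v}}) X u v"
    using reach_within_if_reach[of "G - {{u, v}}" X] assms(2) by blast
  moreover have "adjacent G u v" using \<open>e \<in> G\<close> uv by (simp add: adjacent_def)
  ultimately show False
    using one_degenerate_edge_is_bridge[OF assms(1)
        no_exposed_imp_one_degenerate[OF assms(1,3,4)] uv(2,3)] by blast
qed

lemma acyclic_graph_no_exposed_edge:
  assumes "acyclic_graph T"
  shows "\<not> exposed_in T S x y"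
proof
  assume "exposed_in T S x y"
  then obtain z where "z \<in> common_neighbours T S x y" "adjacent T x y"
    by (auto simp: exposed_in_def)
  then have "is_cycle T [x, y, z]"
    by (auto simp: is_cycle_def common_neighbours_def neighbours_def adjacent_def
        insert_commute less_Suc_eq)
  with assms show False by (auto simp: acyclic_graph_def)
qed

lemma heaviest_exposed_edge_exists:
  fixes d :: "'a \<Rightarrow> 'a \<Rightarrow> real"
  assumes "finite X" "exposed_in G X u v"
  obtains x y where "exposed_in G X x y" "\<And>a b. exposed_in G X a b \<Longrightarrow> d a b \<le> d x y"
proof -
  let ?P = "{(a, b) \<in> X \<times> X. exposed_in G X a b}"
  have "finite ?P" "?P \<noteq> {}"
    using assms by (auto simp: exposed_in_def intro: finite_subset[of _ "X \<times> X"])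
  then obtain p where "is_arg_min (\<lambda>p. - d (fst p) (snd p)) (\<lambda>p. p \<in> ?P) p"
    using ex_is_arg_min_if_finite by blast
  then have max: "exposed_in G X (fst p) (snd p)"
      "\<And>a b. (a, b) \<in> ?P \<Longrightarrow> d a b \<le> d (fst p) (snd p)"
    unfolding is_arg_min_def by (auto simp: not_less)
  show ?thesis
  proof (rule that[OF max(1)])
    fix a b assume "exposed_in G X a b"
    then have "(a, b) \<in> ?P" by (simp add: exposed_in_def)
    then show "d a b \<le> d (fst p) (snd p)" by (rule max(2))
  qed
qed

lemma d_erasure_iff:
  assumes "finite X" "G \<subseteq> all_pairs X"
  shows "d_erasure X d G H \<longleftrightarrow>
    (\<exists>x y. H = G - {{x, y}} \<and> exposed_in G X x y \<and>
      (\<forall>u v. exposed_in G X u v \<longrightarrow> d u v \<le> d x y))"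
  using exposed_edge_iff_exposed_in[OF assms] by (simp add: d_erasure_def)

lemma hereditarily_simplicial_complete_graph:
  "hereditarily_simplicial (complete_graph X) X"
  unfolding hereditarily_simplicial_def
proof (intro allI impI)
  fix S assume "S \<subseteq> X" "S \<noteq> {}"
  then obtain v where "v \<in> S" by blast
  with \<open>S \<subseteq> X\<close> have "simplicial (complete_graph X) S v"
    by (auto simp: simplicial_def neighbours_def pairwise_def adjacent_def complete_graph_def)
  then show "\<exists>v. simplicial (complete_graph X) S v" by blast
qed

section \<open>Minimum spanning trees of a finite metric space\<close>

context
  fixes X :: "'a set" and d :: "'a \<Rightarrow> 'a \<Rightarrow> real"
  assumes finite_space: "finite X" and metric: "Metric_space X d"
begin

lemma finite_edge_set: "E \<subseteq> all_pairs X \<Longrightarrow> finite E"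
  by (erule finite_subset[OF _ finite_all_pairs[OF finite_space]])

abbreviation total_weight :: "'a set set \<Rightarrow> real" where
  "total_weight E \<equiv> \<Sum>e\<in>E. edge_weight d e"

lemma edge_weight_doubleton: "edge_weight d {x, y} = d x y"
  unfolding edge_weight_def
  by (rule the_equality) (auto simp: doubleton_eq_iff Metric_space.commute[OF metric])

lemma edge_weight_pos:
  assumes "e \<in> all_pairs X"
  shows "0 < edge_weight d e"
proof -
  obtain x y where "e = {x, y}" "x \<in> X" "y \<in> X" "x \<noteq> y"
    using assms by (auto simp: all_pairs_def)
  then have "d x y \<noteq> 0" using Metric_space.zero[OF metric] by blast
  with Metric_space.nonneg[OF metric, of x y] \<open>e = {x, y}\<close> show ?thesis
    by (simp add: edge_weight_doubleton)
qed

lemma total_weight_mono: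
  assumes "A \<subseteq> B" "B \<subseteq> all_pairs X"
  shows "total_weight A \<le> total_weight B"
proof (rule sum_mono2[OF _ assms(1)])
  show "finite B" using assms(2) by (rule finite_edge_set)
  fix b assume "b \<in> B - A"
  with assms(2) have "b \<in> all_pairs X" by blast
  then show "0 \<le> edge_weight d b" using edge_weight_pos by (simp add: less_imp_le)
qed

lemma total_weight_exchange:
  assumes "finite T" "{x, y} \<in> T" "{a, b} \<notin> T"
  shows "total_weight (insert {a, b} (T - {{x, y}})) = total_weight T - d x y + d a b"
  using assms by (simp add: sum_diff1 edge_weight_doubleton)

lemma mst_weight_le_connected:
  assumes "minimum_spanning_tree X d T" "H \<subseteq> all_pairs X" "connected_graph X H"
  shows "total_weight T \<le> total_weight H"
proof -
  obtain T' where "T' \<subseteq> H" "spanning_tree X T'"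
    using connected_graph_has_spanning_tree[OF finite_space assms(2,3)] .
  then have "total_weight T \<le> total_weight T'"
    using assms(1) by (simp add: minimum_spanning_tree_def)
  also have "\<dots> \<le> total_weight H"
    using total_weight_mono[OF \<open>T' \<subseteq> H\<close> assms(2)] .
  finally show ?thesis .
qed

lemma mst_exists: "\<exists>T. minimum_spanning_tree X d T"
proof -
  have "{T. spanning_tree X T} \<subseteq> Pow (all_pairs X)"
    by (auto simp: spanning_tree_def is_graph_on_def)
  then have "finite {T. spanning_tree X T}"
    using finite_all_pairs[OF finite_space] by (simp add: finite_subset)
  moreover obtain T0 where "spanning_tree X T0"
    using connected_graph_has_spanning_tree[OF finite_space _ complete_graph_connected]
    by (auto simp: complete_graph_def)
  ultimately obtain T where "is_arg_min total_weight (\<lambda>T. T \<in> {T. spanning_tree X T}) T"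
    using ex_is_arg_min_if_finite[of "{T. spanning_tree X T}" total_weight] by blast
  then show ?thesis
    unfolding minimum_spanning_tree_def is_arg_min_def by (auto simp: not_less)
qed

lemma mst_inside_light_connected_graph:
  assumes "minimum_spanning_tree X d T" "H \<subseteq> all_pairs X" "connected_graph X H"
    "total_weight H \<le> total_weight T"
  obtains T' where "T' \<subseteq> H" "minimum_spanning_tree X d T'"
proof -
  obtain T' where "T' \<subseteq> H" "spanning_tree X T'"
    using connected_graph_has_spanning_tree[OF finite_space assms(2,3)] .
  moreover have "total_weight T' \<le> total_weight T"
    using total_weight_mono[OF \<open>T' \<subseteq> H\<close> assms(2)] assms(4) by linarith
  then have "minimum_spanning_tree X d T'"
    using \<open>spanning_tree X T'\<close> assms(1) unfolding minimum_spanning_tree_def by force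
  ultimately show ?thesis using that by blast
qed

lemma mst_edge_is_bridge:
  assumes "minimum_spanning_tree X d T" "{x, y} \<in> T"
  shows "\<not> reach (T - {{x, y}}) x y"
proof
  assume "reach (T - {{x, y}}) x y"
  have "T \<subseteq> all_pairs X" "connected_graph X T"
    using assms(1) by (auto simp: minimum_spanning_tree_def spanning_tree_def is_graph_on_def)
  then have "total_weight T \<le> total_weight (T - {{x, y}})"
    using mst_weight_le_connected[OF assms(1)]
      connected_graph_replace_edge[OF _ subset_refl \<open>reach (T - {{x, y}}) x y\<close>] by blast
  moreover have "finite T" using \<open>T \<subseteq> all_pairs X\<close> by (rule finite_edge_set)
  then have "total_weight (T - {{x, y}}) = total_weight T - edge_weight d {x, y}"
    using assms(2) by (simp add: sum_diff1)
  moreover have "0 < edge_weight d {x, y}"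
    using edge_weight_pos \<open>T \<subseteq> all_pairs X\<close> assms(2) by blast
  ultimately show False by linarith
qed

lemma mst_exchange:
  assumes mst: "minimum_spanning_tree X d T" and "T \<subseteq> G" "G \<subseteq> all_pairs X"
    and chordal: "hereditarily_simplicial G X" and exposed: "exposed_in G X x y"
    and "{x, y} \<in> T"
  obtains a b where "exposed_in G X a b" "{a, b} \<notin> T" "d x y \<le> d a b"
    "connected_graph X (insert {a, b} (T - {{x, y}}))"
proof -
  have "T \<subseteq> all_pairs X" "connected_graph X T"
    using mst by (auto simp: minimum_spanning_tree_def spanning_tree_def is_graph_on_def)
  define A where "A = {z. reach (T - {{x, y}}) x z}"
  have "x \<in> A" by (simp add: A_def)
  have "y \<notin> A" using mst_edge_is_bridge[OF mst \<open>{x, y} \<in> T\<close>] by (simp add: A_def)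
  obtain a b where ab: "exposed_in G X a b" "a \<in> A" "b \<notin> A" "{a, b} \<noteq> {x, y}"
    using exposed_edge_across_cut[OF finite_space chordal exposed \<open>x \<in> A\<close> \<open>y \<notin> A\<close>] by blast
  then have "a \<in> X" "b \<in> X" "adjacent G a b" by (auto simp: exposed_in_def)
  have "reach (T - {{x, y}}) x a" using \<open>a \<in> A\<close> by (simp add: A_def)
  have "{a, b} \<notin> T"
  proof
    assume "{a, b} \<in> T"
    with ab(4) have "adjacent (T - {{x, y}}) a b"
      using \<open>adjacent G a b\<close> by (simp add: adjacent_def)
    with \<open>reach (T - {{x, y}}) x a\<close> have "b \<in> A"
      by (simp add: A_def rtranclp.rtrancl_into_rtrancl)
    with \<open>b \<notin> A\<close> show False by blast
  qed
  define T' where "T' = insert {a, b} (T - {{x, y}})"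
  have "T - {{x, y}} \<subseteq> T'" by (auto simp: T'_def)
  have "x \<in> X" using exposed by (simp add: exposed_in_def)
  then have "reach (T - {{x, y}}) y b"
    using reach_remove_edge_dichotomy[OF \<open>connected_graph X T\<close> _ \<open>b \<in> X\<close>, of x y]
      \<open>x \<in> A\<close> \<open>b \<notin> A\<close> by (auto simp: A_def)
  then have "reach T' b y"
    using reach_sym[OF reach_mono[OF \<open>T - {{x, y}} \<subseteq> T'\<close>]] by blast
  moreover have "reach T' x a"
    using reach_mono[OF \<open>T - {{x, y}} \<subseteq> T'\<close> \<open>reach (T - {{x, y}}) x a\<close>] .
  moreover have "adjacent T' a b" using \<open>adjacent G a b\<close> by (simp add: T'_def adjacent_def)
  ultimately have "reach T' x y"
    by (meson rtranclp.rtrancl_into_rtrancl rtranclp_trans)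
  then have "connected_graph X T'"
    using connected_graph_replace_edge[OF \<open>connected_graph X T\<close> \<open>T - {{x, y}} \<subseteq> T'\<close>] by blast
  moreover have "T' \<subseteq> all_pairs X"
    using \<open>T \<subseteq> all_pairs X\<close> \<open>a \<in> X\<close> \<open>b \<in> X\<close> \<open>adjacent G a b\<close>
    by (auto simp: T'_def adjacent_def)
  ultimately have "total_weight T \<le> total_weight T'"
    by (rule mst_weight_le_connected[OF mst, rotated])
  moreover have "finite T" using \<open>T \<subseteq> all_pairs X\<close> by (rule finite_edge_set)
  then have "total_weight T' = total_weight T - d x y + d a b"
    unfolding T'_def using \<open>{x, y} \<in> T\<close> \<open>{a, b} \<notin> T\<close> by (rule total_weight_exchange)
  ultimately have "d x y \<le> d a b" by linarith
  show ?thesis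
    using ab(1) \<open>{a, b} \<notin> T\<close> \<open>d x y \<le> d a b\<close> \<open>connected_graph X T'\<close>
    unfolding T'_def by (rule that)
qed

lemma erasure_keeps_mst:
  assumes mst: "minimum_spanning_tree X d T" and "T \<subseteq> G" "G \<subseteq> all_pairs X"
    and chordal: "hereditarily_simplicial G X" and exposed: "exposed_in G X x y"
    and heaviest: "\<And>u v. exposed_in G X u v \<Longrightarrow> d u v \<le> d x y"
  obtains T' where "T' \<subseteq> G - {{x, y}}" "minimum_spanning_tree X d T'"
proof (cases "{x, y} \<in> T")
  case False
  with \<open>T \<subseteq> G\<close> have "T \<subseteq> G - {{x, y}}" by blast
  then show ?thesis using mst by (rule that)
next
  case True
  obtain a b where ab: "exposed_in G X a b" "{a, b} \<notin> T" "d x y \<le> d a b"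
    and connected: "connected_graph X (insert {a, b} (T - {{x, y}}))"
    using mst_exchange[OF assms(1-5) True] .
  then have "d a b = d x y" using heaviest by (simp add: order_antisym)
  define H where "H = insert {a, b} (T - {{x, y}})"
  have "{a, b} \<in> G" "{a, b} \<noteq> {x, y}"
    using ab(1,2) True by (auto simp: exposed_in_def adjacent_def)
  then have "H \<subseteq> G - {{x, y}}" using \<open>T \<subseteq> G\<close> by (auto simp: H_def)
  then have "H \<subseteq> all_pairs X" using \<open>G \<subseteq> all_pairs X\<close> by blast
  have "finite T" using \<open>T \<subseteq> G\<close> \<open>G \<subseteq> all_pairs X\<close> by (blast intro: finite_edge_set)
  then have "total_weight H = total_weight T"
    unfolding H_def using total_weight_exchange True ab(2) \<open>d a b = d x y\<close> by simp
  then obtain T' where "T' \<subseteq> H" "minimum_spanning_tree X d T'"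
    using mst_inside_light_connected_graph[OF mst \<open>H \<subseteq> all_pairs X\<close> connected[folded H_def]]
    by auto
  with \<open>H \<subseteq> G - {{x, y}}\<close> show ?thesis by (blast intro: that)
qed

lemma heaviest_exposed_edge_outside_mst:
  assumes mst: "minimum_spanning_tree X d T" and "T \<subseteq> G" "G \<subseteq> all_pairs X"
    and chordal: "hereditarily_simplicial G X" and "G \<noteq> T"
  obtains x y where "exposed_in G X x y" "{x, y} \<notin> T"
    "\<And>u v. exposed_in G X u v \<Longrightarrow> d u v \<le> d x y"
proof -
  have "connected_graph X T" using mst by (simp add: minimum_spanning_tree_def spanning_tree_def)
  then obtain u v where "exposed_in G X u v"
    using no_exposed_edge_imp_eq_connected_subgraph[OF finite_space assms(3,4) _ assms(2)]
      \<open>G \<noteq> T\<close> by metis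
  then obtain x y where xy: "exposed_in G X x y"
    and heaviest: "\<And>u v. exposed_in G X u v \<Longrightarrow> d u v \<le> d x y"
    using heaviest_exposed_edge_exists[OF finite_space] by metis
  show ?thesis
  proof (cases "{x, y} \<in> T")
    case False
    show ?thesis using xy False heaviest by (rule that)
  next
    case True
    obtain a b where ab: "exposed_in G X a b" "{a, b} \<notin> T" "d x y \<le> d a b"
      using mst_exchange[OF assms(1-4) xy True] by metis
    have "d u v \<le> d a b" if "exposed_in G X u v" for u v
      using heaviest[OF that] ab(3) by linarith
    with ab(1,2) show ?thesis by (rule that)
  qed
qed

lemma erasure_invariant:
  assumes "(d_erasure X d)\<^sup>*\<^sup>* (complete_graph X) G"
  shows "G \<subseteq> all_pairs X \<and> hereditarily_simplicial G X \<and> (\<exists>T \<subseteq> G. minimum_spanning_tree X d T)"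
  using assms
proof (induction rule: rtranclp_induct)
  case base
  obtain T where "minimum_spanning_tree X d T" using mst_exists by blast
  moreover from this have "T \<subseteq> complete_graph X"
    by (simp add: minimum_spanning_tree_def spanning_tree_def is_graph_on_def complete_graph_def)
  ultimately show ?case
    using hereditarily_simplicial_complete_graph by (auto simp: complete_graph_def)
next
  case (step G H)
  then have "G \<subseteq> all_pairs X" and chordal: "hereditarily_simplicial G X"
    and "\<exists>T \<subseteq> G. minimum_spanning_tree X d T" by blast+
  then obtain T where "T \<subseteq> G" "minimum_spanning_tree X d T" by blast
  obtain x y where H: "H = G - {{x, y}}" and exposed: "exposed_in G X x y"
    and heaviest: "\<And>u v. exposed_in G X u v \<Longrightarrow> d u v \<le> d x y"
    using step.hyps(2) d_erasure_iff[OF finite_space \<open>G \<subseteq> all_pairs X\<close>] by metis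
  obtain T' where "T' \<subseteq> H" "minimum_spanning_tree X d T'"
    using erasure_keeps_mst[OF \<open>minimum_spanning_tree X d T\<close> \<open>T \<subseteq> G\<close> \<open>G \<subseteq> all_pairs X\<close>
        chordal exposed heaviest] H by metis
  moreover have "hereditarily_simplicial H X"
    using hereditarily_simplicial_remove_exposed[OF finite_space chordal exposed] H by simp
  ultimately show ?case using \<open>G \<subseteq> all_pairs X\<close> H by blast
qed

lemma final_graph_is_mst:
  assumes "(d_erasure X d)\<^sup>*\<^sup>* (complete_graph X) G" "\<nexists>H. d_erasure X d G H"
  shows "minimum_spanning_tree X d G"
proof -
  obtain T where "G \<subseteq> all_pairs X" "hereditarily_simplicial G X" "T \<subseteq> G"
    "minimum_spanning_tree X d T"
    using erasure_invariant[OF assms(1)] by blast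
  have "\<not> exposed_in G X u v" for u v
  proof
    assume "exposed_in G X u v"
    then obtain x y where "exposed_in G X x y" "\<And>u v. exposed_in G X u v \<Longrightarrow> d u v \<le> d x y"
      using heaviest_exposed_edge_exists[OF finite_space] by metis
    then have "d_erasure X d G (G - {{x, y}})"
      using d_erasure_iff[OF finite_space \<open>G \<subseteq> all_pairs X\<close>] by blast
    with assms(2) show False by blast
  qed
  moreover have "connected_graph X T"
    using \<open>minimum_spanning_tree X d T\<close> by (simp add: minimum_spanning_tree_def spanning_tree_def)
  ultimately have "G = T"
    using no_exposed_edge_imp_eq_connected_subgraph[OF finite_space \<open>G \<subseteq> all_pairs X\<close>
        \<open>hereditarily_simplicial G X\<close> _ \<open>T \<subseteq> G\<close>] by blast
  with \<open>minimum_spanning_tree X d T\<close> show ?thesis by simp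
qed

lemma mst_reachable_by_erasures:
  assumes mst: "minimum_spanning_tree X d T"
  shows "G \<subseteq> all_pairs X \<Longrightarrow> hereditarily_simplicial G X \<Longrightarrow> T \<subseteq> G \<Longrightarrow>
    (d_erasure X d)\<^sup>*\<^sup>* G T"
proof (induction "card (G - T)" arbitrary: G rule: less_induct)
  case less
  show ?case
  proof (cases "G = T")
    case False
    obtain x y where exposed: "exposed_in G X x y" "{x, y} \<notin> T"
      and heaviest: "\<And>u v. exposed_in G X u v \<Longrightarrow> d u v \<le> d x y"
      using heaviest_exposed_edge_outside_mst[OF mst less.prems(3,1,2) False] by metis
    define H where "H = G - {{x, y}}"
    have "d_erasure X d G H"
      using d_erasure_iff[OF finite_space less.prems(1)] exposed(1) heaviest H_def by blast
    moreover have "(d_erasure X d)\<^sup>*\<^sup>* H T"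
    proof (rule less.hyps)
      have "{x, y} \<in> G - T" using exposed by (auto simp: exposed_in_def adjacent_def)
      moreover have "finite (G - T)" using less.prems(1) by (blast intro: finite_edge_set)
      moreover have "H - T = (G - T) - {{x, y}}" by (auto simp: H_def)
      ultimately show "card (H - T) < card (G - T)" by (metis card_Diff1_less)
      show "H \<subseteq> all_pairs X" using less.prems(1) H_def by blast
      show "hereditarily_simplicial H X"
        using hereditarily_simplicial_remove_exposed[OF finite_space less.prems(2) exposed(1)]
        by (simp add: H_def)
      show "T \<subseteq> H" using less.prems(3) exposed(2) H_def by blast
    qed
    ultimately show ?thesis by (rule converse_rtranclp_into_rtranclp)
  qed simp
qed

lemma mst_admits_no_erasure:
  assumes "minimum_spanning_tree X d T"
  shows "\<not> d_erasure X d T H"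
proof
  assume "d_erasure X d T H"
  moreover have "T \<subseteq> all_pairs X" "acyclic_graph T"
    using assms by (auto simp: minimum_spanning_tree_def spanning_tree_def is_graph_on_def)
  ultimately obtain x y where "exposed_in T X x y"
    using d_erasure_iff[OF finite_space] by metis
  with acyclic_graph_no_exposed_edge[OF \<open>acyclic_graph T\<close>] show False by blast
qed

end

lemma rtranclp_iff_successively:
  "R\<^sup>*\<^sup>* a b \<longleftrightarrow> (\<exists>xs. xs \<noteq> [] \<and> hd xs = a \<and> last xs = b \<and> successively R xs)"
proof
  assume "R\<^sup>*\<^sup>* a b"
  then show "\<exists>xs. xs \<noteq> [] \<and> hd xs = a \<and> last xs = b \<and> successively R xs"
  proof (induction rule: converse_rtranclp_induct)
    case base
    show ?case by (intro exI[of _ "[b]"]) simp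
  next
    case (step a a')
    then obtain xs where "xs \<noteq> []" "hd xs = a'" "last xs = b" "successively R xs" by blast
    with step.hyps(1) show ?case
      by (intro exI[of _ "a # xs"]) (auto simp: successively_Cons)
  qed
next
  have "R\<^sup>*\<^sup>* (hd xs) (last xs)" if "xs \<noteq> []" "successively R xs" for xs
    using that by (induction xs) (auto simp: successively_Cons intro: converse_rtranclp_into_rtranclp)
  then show "\<exists>xs. xs \<noteq> [] \<and> hd xs = a \<and> last xs = b \<and> successively R xs \<Longrightarrow> R\<^sup>*\<^sup>* a b"
    by blast
qed

lemma erasure_sequence_iff:
  "erasure_sequence X d Gs \<longleftrightarrow>
    Gs \<noteq> [] \<and> hd Gs = complete_graph X \<and> successively (d_erasure X d) Gs"
  by (auto simp: erasure_sequence_def successively_conv_nth)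

theorem corollary3p3:
  fixes X :: "'a set" and d :: "'a \<Rightarrow> 'a \<Rightarrow> real"
  assumes "finite X" and "Metric_space X d"
  shows "(\<forall>Gs. maximal_erasure_sequence X d Gs \<longrightarrow> minimum_spanning_tree X d (last Gs))
       \<and> (\<forall>T. minimum_spanning_tree X d T \<longrightarrow>
              (\<exists>Gs. maximal_erasure_sequence X d Gs \<and> last Gs = T))"
proof (intro conjI allI impI)
  fix Gs assume "maximal_erasure_sequence X d Gs"
  then have "(d_erasure X d)\<^sup>*\<^sup>* (complete_graph X) (last Gs)" "\<nexists>H. d_erasure X d (last Gs) H"
    unfolding maximal_erasure_sequence_def erasure_sequence_iff rtranclp_iff_successively
    by blast+
  then show "minimum_spanning_tree X d (last Gs)" by (rule final_graph_is_mst[OF assms])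
next
  fix T assume mst: "minimum_spanning_tree X d T"
  then have "T \<subseteq> complete_graph X"
    by (simp add: minimum_spanning_tree_def spanning_tree_def is_graph_on_def complete_graph_def)
  then have "(d_erasure X d)\<^sup>*\<^sup>* (complete_graph X) T"
    using mst_reachable_by_erasures[OF assms mst _ hereditarily_simplicial_complete_graph]
    by (simp add: complete_graph_def)
  then obtain Gs where "erasure_sequence X d Gs" "last Gs = T"
    unfolding rtranclp_iff_successively erasure_sequence_iff by blast
  with mst_admits_no_erasure[OF assms mst]
  show "\<exists>Gs. maximal_erasure_sequence X d Gs \<and> last Gs = T"
    by (auto simp: maximal_erasure_sequence_def)
qed

end
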